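(* If transformation graphs $G_1$ and $G_2$ reflect sequences of transitions $\sigma_1$ and $\sigma_2$ respectively, then $G_1\odot G_2$ reflects the concatenation $\sigma_1\sigma_2$.
   Context: Fix a finite set of clocks $X=\{x_0,x_1,\dots,x_m\}$, where $x_0$ is a special reference clock. A valuation is a map $v:X\to\mathbb{R}_{\ge 0}$ with $v(x_0)=0$. For $\delta\ge 0$, $v+\delta$ adds $\delta$ to every clock other than $x_0$; $[R]v$ sets the clocks of $R\subseteq X\setminus\{x_0\}$ to $0$. A guard is a conjunction of atomic constraints $x\sim c$ with $x\in X\setminus\{x_0\}$, $\sim\in\{<,\le,=,\ge,>\}$, $c\in\mathbb{N}$. A transition $t$ is a pair $(g,R)$ of a guard and a reset set $R\subseteq X\setminus\{x_0\}$; $v\xrightarrow{t}^{\delta}v'$ means $v+\delta\models g$ and $v'=[R](v+\delta)$. For $\sigma=t_1\cdots t_k$, $v_0\xrightarrow{\sigma}^{\delta}v_k$ means there are valuations $v_1,\dots,v_{k-1}$ and $\delta_i\ge0$ with $v_{i-1}\xrightarrow{t_i}^{\delta_i}v_i$ and $\delta=\sum_i\delta_i$. A loose valuation is a map $v:X\to\mathbb{R}$ with $v(x)\ge v(x_0)$ for all $x\in X$; $\mathit{norm}(v)$ is the valuation $x\mapsto v(x)-v(x_0)$. A weight is a pair $(\preccurlyeq,d)$ with $\preccurlyeq\in\{<,\le\}$, $d\in\mathbb{Z}$. A transformation graph with $k+1$ columns is a directed graph with vertex set $\{0,\dots,k\}\times X$ whose edges carry weights; vertex $(j,x)$ lies in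 column $j$. A solution of such a graph is a sequence $v_0,\dots,v_k$ of loose valuations such that for every edge $(i,x)\to(p,y)$ of weight $(\preccurlyeq,d)$ we have $v_p(y)-v_i(x)\preccurlyeq d$. A transformation graph with $k+1$ columns reflects a sequence $\sigma$ if (i) for every solution $v_0,\dots,v_k$ we have $\mathit{norm}(v_0)\xrightarrow{\sigma}^{\delta}\mathit{norm}(v_k)$ with $\delta=v_0(x_0)-v_k(x_0)$, and (ii) whenever $v_0\xrightarrow{\sigma}^{\delta}v'$ for valuations $v_0,v'$, there is a solution $v_0,u_1,\dots,u_k$ with $u_k=v'-\delta$, where $v'-\delta$ is the loose valuation $x\mapsto v'(x)-\delta$ for all $x\in X$ (including $x_0$). Composition: if $G_1$ has $k_1$ columns and $G_2$ has $k_2$ columns, $G_1\odot G_2$ is the transformation graph with vertex set $\{0,\dots,k_1+k_2-1\}\times X$ whose edges are: the edges of $G_1$ (on columns $0,\dots,k_1-1$); the edges of $G_2$ shifted by $k_1$ columns (an edge $(i,x)\to(j,y)$ of $G_2$ becomes $(i+k_1,x)\to(j+k_1,y)$ with the same weight); and, for every $x\in X$, edges $(k_1-1,x)\to(k_1,x)$ and $(k_1,x)\to(k_1-1,x)$ of weight $(\le,0)$. *)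

theory Defs
  imports Main "HOL.Real"
begin

text \<open>Clocks are the elements of a finite type 'c; the reference clock x0 is a parameter.\<close>

type_synonym 'c val = "'c \<Rightarrow> real"

definition is_val :: "'c \<Rightarrow> 'c val \<Rightarrow> bool" where
  "is_val x0 v \<longleftrightarrow> v x0 = 0 \<and> (\<forall>x. v x \<ge> 0)"

definition delay :: "'c \<Rightarrow> 'c val \<Rightarrow> real \<Rightarrow> 'c val" where
  "delay x0 v d = (\<lambda>x. if x = x0 then v x else v x + d)"

definition reset :: "'c set \<Rightarrow> 'c val \<Rightarrow> 'c val" where
  "reset R v = (\<lambda>x. if x \<in> R then 0 else v x)"

datatype cmp = CLt | CLe | CEq | CGe | CGt

fun cmp_sat :: "cmp \<Rightarrow> real \<Rightarrow> real \<Rightarrow> bool" where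
  "cmp_sat CLt a b = (a < b)"
| "cmp_sat CLe a b = (a \<le> b)"
| "cmp_sat CEq a b = (a = b)"
| "cmp_sat CGe a b = (a \<ge> b)"
| "cmp_sat CGt a b = (a > b)"

type_synonym 'c guard = "('c \<times> cmp \<times> nat) list"

definition guard_sat :: "'c val \<Rightarrow> 'c guard \<Rightarrow> bool" where
  "guard_sat v g \<longleftrightarrow> (\<forall>(x, r, c) \<in> set g. cmp_sat r (v x) (real c))"

type_synonym 'c trans = "'c guard \<times> 'c set"

definition trans_wf :: "'c \<Rightarrow> 'c trans \<Rightarrow> bool" where
  "trans_wf x0 t \<longleftrightarrow> (\<forall>(x, r, c) \<in> set (fst t). x \<noteq> x0) \<and> x0 \<notin> snd t"

definition step :: "'c \<Rightarrow> 'c val \<Rightarrow> 'c trans \<Rightarrow> real \<Rightarrow> 'c val \<Rightarrow> bool" where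
  "step x0 v t d v' \<longleftrightarrow> d \<ge> 0 \<and> guard_sat (delay x0 v d) (fst t) \<and> v' = reset (snd t) (delay x0 v d)"

inductive run :: "'c \<Rightarrow> 'c val \<Rightarrow> 'c trans list \<Rightarrow> real \<Rightarrow> 'c val \<Rightarrow> bool" for x0 where
  run_Nil: "run x0 v [] 0 v"
| run_Cons: "\<lbrakk>step x0 v t d v'; (\<sigma> \<noteq> [] \<longrightarrow> is_val x0 v'); run x0 v' \<sigma> d' v''\<rbrakk>
             \<Longrightarrow> run x0 v (t # \<sigma>) (d + d') v''"

definition loose :: "'c \<Rightarrow> 'c val \<Rightarrow> bool" where
  "loose x0 v \<longleftrightarrow> (\<forall>x. v x \<ge> v x0)"

definition norm :: "'c \<Rightarrow> 'c val \<Rightarrow> 'c val" where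
  "norm x0 v = (\<lambda>x. v x - v x0)"

text \<open>Weight (strict, d): strict = True means <, False means \<le>.\<close>
type_synonym weight = "bool \<times> int"

definition wsat :: "weight \<Rightarrow> real \<Rightarrow> bool" where
  "wsat w a \<longleftrightarrow> (if fst w then a < of_int (snd w) else a \<le> of_int (snd w))"

text \<open>A transformation graph: number of columns and a set of weighted edges
  ((i,x),(p,y),w) meaning (i,x) \<rightarrow> (p,y) with weight w.\<close>
type_synonym 'c tgraph = "nat \<times> ((nat \<times> 'c) \<times> (nat \<times> 'c) \<times> weight) set"

definition cols :: "'c tgraph \<Rightarrow> nat" where "cols G = fst G"
definition edges :: "'c tgraph \<Rightarrow> ((nat \<times> 'c) \<times> (nat \<times> 'c) \<times> weight) set" where
  "edges G = snd G"

definition tgraph_wf :: "'c tgraph \<Rightarrow> bool" where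
  "tgraph_wf G \<longleftrightarrow> cols G \<ge> 1 \<and>
     (\<forall>((i, x), (p, y), w) \<in> edges G. i < cols G \<and> p < cols G)"

definition solution :: "'c \<Rightarrow> 'c tgraph \<Rightarrow> (nat \<Rightarrow> 'c val) \<Rightarrow> bool" where
  "solution x0 G v \<longleftrightarrow> (\<forall>j < cols G. loose x0 (v j)) \<and>
     (\<forall>((i, x), (p, y), w) \<in> edges G. wsat w (v p y - v i x))"

definition reflects :: "'c \<Rightarrow> 'c tgraph \<Rightarrow> 'c trans list \<Rightarrow> bool" where
  "reflects x0 G \<sigma> \<longleftrightarrow>
     (\<forall>v. solution x0 G v \<longrightarrow>
        run x0 (norm x0 (v 0)) \<sigma> (v 0 x0 - v (cols G - 1) x0) (norm x0 (v (cols G - 1)))) \<and>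
     (\<forall>v0 d v'. is_val x0 v0 \<longrightarrow> is_val x0 v' \<longrightarrow> run x0 v0 \<sigma> d v' \<longrightarrow>
        (\<exists>u. solution x0 G u \<and> u 0 = v0 \<and> u (cols G - 1) = (\<lambda>x. v' x - d)))"

definition compose :: "'c tgraph \<Rightarrow> 'c tgraph \<Rightarrow> 'c tgraph" where
  "compose G1 G2 =
     (cols G1 + cols G2,
      edges G1
      \<union> {((i + cols G1, x), (j + cols G1, y), w) | i x j y w. ((i, x), (j, y), w) \<in> edges G2}
      \<union> {((cols G1 - 1, x), (cols G1, x), (False, 0)) | x. True}
      \<union> {((cols G1, x), (cols G1 - 1, x), (False, 0)) | x. True})"

end

theory Submission
  imports Defs
begin

(* A solution of G1 \<odot> G2 consists of a solution of G1 on columns 0..k1-1 and a solution of G2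
   on columns k1..k1+k2-1; the two (\<le>,0)-edges between columns k1-1 and k1 force these two
   boundary columns to coincide.  Conversely, two solutions agreeing on the shared boundary column
   glue to a solution of the composite, and solutions stay solutions when all their values are
   shifted by a constant.

   Soundness
   (part (i) of "reflects") follows by restricting a composite solution and concatenating the two
   runs obtained; completeness (part (ii)) by splitting the run, applying the hypotheses to both
   halves and gluing the resulting solutions, the second one shifted by the delay of the first
   half. *)

inductive_cases run_NilE: "run x0 v [] d v'"
inductive_cases run_ConsE: "run x0 v (t # s) d v'"

text \<open>Two runs meeting in a valuation concatenate; the meeting point becomes an intermediate
  valuation of the combined run, which is why it must be a proper valuation.\<close>
lemma run_append:
  assumes "run x0 v s1 d1 vm" and "is_val x0 vm" and "run x0 vm s2 d2 v'"
  shows "run x0 v (s1 @ s2) (d1 + d2) v'"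
  using assms
proof (induction rule: run.induct)
  case (run_Nil v)
  then show ?case by simp
next
  case (run_Cons v t d w \<sigma> d' v'')
  have "is_val x0 w" if "\<sigma> @ s2 \<noteq> []"
  proof (cases "\<sigma> = []")
    case True
    with run_Cons.hyps(3) have "w = v''" by (auto elim: run_NilE)
    with run_Cons.prems(1) show ?thesis by simp
  qed (use run_Cons.hyps(2) in simp)
  moreover have "run x0 w (\<sigma> @ s2) (d' + d2) v'" using run_Cons by blast
  ultimately have "run x0 v (t # \<sigma> @ s2) (d + (d' + d2)) v'"
    using run.run_Cons[OF run_Cons.hyps(1)] by blast
  then show ?case by (simp add: add.assoc)
qed

lemma run_split:
  assumes "run x0 v (s1 @ s2) d v'" and "is_val x0 v" and "is_val x0 v'"
  shows "\<exists>vm d1 d2. run x0 v s1 d1 vm \<and> run x0 vm s2 d2 v' \<and> d = d1 + d2 \<and> is_val x0 vm"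
  using assms
proof (induction s1 arbitrary: v d)
  case Nil
  then show ?case using run.run_Nil by fastforce
next
  case (Cons t s1)
  from Cons.prems(1) have "run x0 v (t # (s1 @ s2)) d v'" by simp
  then obtain e w e' where st: "step x0 v t e w"
    and w_val': "s1 @ s2 \<noteq> [] \<longrightarrow> is_val x0 w"
    and rw: "run x0 w (s1 @ s2) e' v'" and d: "d = e + e'"
    by (rule run_ConsE) (auto simp del: append_is_Nil_conv)
  have w_val: "is_val x0 w"
  proof (cases "s1 @ s2 = []")
    case True
    with rw have "w = v'" by (auto elim: run_NilE)
    with Cons.prems(3) show ?thesis by simp
  qed (use w_val' in simp)
  obtain vm d1 d2 where r1: "run x0 w s1 d1 vm" and r2: "run x0 vm s2 d2 v'"
    and e': "e' = d1 + d2" and vm: "is_val x0 vm"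
    using Cons.IH[OF rw w_val Cons.prems(3)] by blast
  have "run x0 v (t # s1) (e + d1) vm"
    using run.run_Cons[OF st _ r1] w_val by blast
  with r2 vm show ?case using d e' by (metis add.assoc)
qed

text \<open>Normalising a loose valuation yields a valuation; this is how solutions become runs.\<close>
lemma loose_norm: "loose x0 v \<Longrightarrow> is_val x0 (norm x0 v)"
  by (auto simp: loose_def norm_def is_val_def)

lemma cols_compose: "cols (compose G1 G2) = cols G1 + cols G2"
  by (simp add: compose_def cols_def)

lemma edges_compose:
  "edges (compose G1 G2) = edges G1
      \<union> {((i + cols G1, x), (j + cols G1, y), w) | i x j y w. ((i, x), (j, y), w) \<in> edges G2}
      \<union> {((cols G1 - 1, x), (cols G1, x), (False, 0)) | x. True}
      \<union> {((cols G1, x), (cols G1 - 1, x), (False, 0)) | x. True}"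
  by (simp add: compose_def edges_def)

lemma edges_compose_cases:
  assumes "((i, x), (p, y), w) \<in> edges (compose G1 G2)"
  obtains "((i, x), (p, y), w) \<in> edges G1"
  | i' p' where "i = i' + cols G1" "p = p' + cols G1" "((i', x), (p', y), w) \<in> edges G2"
  | "i = cols G1 - 1" "p = cols G1" "x = y" "w = (False, 0)"
  | "i = cols G1" "p = cols G1 - 1" "x = y" "w = (False, 0)"
  using assms unfolding edges_compose by blast

lemma solution_edge:
  "solution x0 G v \<Longrightarrow> ((i, x), (p, y), w) \<in> edges G \<Longrightarrow> wsat w (v p y - v i x)"
  unfolding solution_def by fast

lemma solution_compose_left:
  assumes "solution x0 (compose G1 G2) v"
  shows "solution x0 G1 v"
proof -
  have "wsat w (v p y - v i x)" if "((i, x), (p, y), w) \<in> edges G1" for i x p y w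
    using that by (intro solution_edge[OF assms]) (unfold edges_compose, blast)
  with assms show ?thesis by (auto simp: solution_def cols_compose)
qed

lemma solution_compose_right:
  assumes "solution x0 (compose G1 G2) v"
  shows "solution x0 G2 (\<lambda>j. v (j + cols G1))"
proof -
  have "wsat w (v (p + cols G1) y - v (i + cols G1) x)" if "((i, x), (p, y), w) \<in> edges G2"
    for i x p y w
    using that by (intro solution_edge[OF assms]) (unfold edges_compose, blast)
  with assms show ?thesis by (auto simp: solution_def cols_compose)
qed

lemma solution_compose_boundary:
  assumes "solution x0 (compose G1 G2) v"
  shows "v (cols G1) = v (cols G1 - 1)"
proof
  fix x
  have "wsat (False, 0) (v (cols G1) x - v (cols G1 - 1) x)"
    by (rule solution_edge[OF assms]) (unfold edges_compose, blast)
  moreover have "wsat (False, 0) (v (cols G1 - 1) x - v (cols G1) x)"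
    by (rule solution_edge[OF assms]) (unfold edges_compose, blast)
  ultimately show "v (cols G1) x = v (cols G1 - 1) x" by (simp add: wsat_def)
qed

text \<open>Edge constraints and looseness only involve differences, so solutions may be shifted.\<close>
lemma solution_shift:
  assumes "solution x0 G u"
  shows "solution x0 G (\<lambda>j x. u j x - c)"
  using assms unfolding solution_def loose_def by auto

definition glue :: "nat \<Rightarrow> (nat \<Rightarrow> 'c val) \<Rightarrow> (nat \<Rightarrow> 'c val) \<Rightarrow> nat \<Rightarrow> 'c val" where
  "glue k u1 u2 j = (if j < k then u1 j else u2 (j - k))"

lemma solution_glue:
  assumes wf: "tgraph_wf G1"
    and u1: "solution x0 G1 u1" and u2: "solution x0 G2 u2"
    and boundary: "u2 0 = u1 (cols G1 - 1)"
  shows "solution x0 (compose G1 G2) (glue (cols G1) u1 u2)"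
proof -
  let ?u = "glue (cols G1) u1 u2"
  have k1: "cols G1 \<ge> 1" using wf by (simp add: tgraph_wf_def)
  have "wsat w (?u p y - ?u i x)" if e: "((i, x), (p, y), w) \<in> edges (compose G1 G2)"
    for i x p y w
    using e
  proof (cases rule: edges_compose_cases)
    case 1
    moreover from this wf have "i < cols G1" "p < cols G1"
      unfolding tgraph_wf_def by fast+
    ultimately show ?thesis using solution_edge[OF u1] by (simp add: glue_def)
  next
    case (2 i' p')
    then show ?thesis using solution_edge[OF u2] by (simp add: glue_def)
  qed (use k1 boundary in \<open>simp_all add: glue_def wsat_def\<close>)
  moreover have "loose x0 (?u j)" if "j < cols G1 + cols G2" for j
    using that u1 u2 by (auto simp: solution_def glue_def)
  ultimately show ?thesis by (auto simp: solution_def cols_compose)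
qed

lemma reflects_compose_sound:
  assumes wf1: "tgraph_wf G1" and wf2: "tgraph_wf G2"
    and r1: "reflects x0 G1 \<sigma>1" and r2: "reflects x0 G2 \<sigma>2"
    and sol: "solution x0 (compose G1 G2) v"
  shows "run x0 (norm x0 (v 0)) (\<sigma>1 @ \<sigma>2)
           (v 0 x0 - v (cols (compose G1 G2) - 1) x0) (norm x0 (v (cols (compose G1 G2) - 1)))"
proof -
  define k1 k2 where "k1 = cols G1" and "k2 = cols G2"
  have k1: "k1 \<ge> 1" and k2: "k2 \<ge> 1" using wf1 wf2 by (auto simp: tgraph_wf_def k1_def k2_def)
  have run1: "run x0 (norm x0 (v 0)) \<sigma>1 (v 0 x0 - v (k1 - 1) x0) (norm x0 (v (k1 - 1)))"
    using r1 solution_compose_left[OF sol] unfolding reflects_def k1_def by blast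
  have "run x0 (norm x0 (v k1)) \<sigma>2 (v k1 x0 - v (k2 - 1 + k1) x0) (norm x0 (v (k2 - 1 + k1)))"
    using r2 solution_compose_right[OF sol] unfolding reflects_def k1_def k2_def by auto
  moreover have "k2 - 1 + k1 = k1 + k2 - 1" using k2 by simp
  ultimately have run2: "run x0 (norm x0 (v (k1 - 1))) \<sigma>2
      (v (k1 - 1) x0 - v (k1 + k2 - 1) x0) (norm x0 (v (k1 + k2 - 1)))"
    using solution_compose_boundary[OF sol] by (simp add: k1_def)
  have "is_val x0 (norm x0 (v (k1 - 1)))"
    using sol k1 by (intro loose_norm) (auto simp: solution_def cols_compose k1_def)
  from run_append[OF run1 this run2] show ?thesis
    by (simp add: cols_compose k1_def k2_def)
qed

lemma reflects_compose_complete: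
  assumes wf1: "tgraph_wf G1" and wf2: "tgraph_wf G2"
    and r1: "reflects x0 G1 \<sigma>1" and r2: "reflects x0 G2 \<sigma>2"
    and v0: "is_val x0 v0" and v': "is_val x0 v'" and run: "run x0 v0 (\<sigma>1 @ \<sigma>2) d v'"
  shows "\<exists>u. solution x0 (compose G1 G2) u \<and> u 0 = v0
             \<and> u (cols (compose G1 G2) - 1) = (\<lambda>x. v' x - d)"
proof -
  define k1 k2 where "k1 = cols G1" and "k2 = cols G2"
  have k1: "k1 \<ge> 1" and k2: "k2 \<ge> 1" using wf1 wf2 by (auto simp: tgraph_wf_def k1_def k2_def)
  obtain vm d1 d2 where run1: "run x0 v0 \<sigma>1 d1 vm" and run2: "run x0 vm \<sigma>2 d2 v'"
    and d: "d = d1 + d2" and vm: "is_val x0 vm"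
    using run_split[OF run v0 v'] by blast
  have "k2 - 1 + k1 = k1 + k2 - 1" "\<not> k1 + k2 - 1 < k1" using k2 by simp_all
  obtain u1 where u1: "solution x0 G1 u1" "u1 0 = v0" "u1 (k1 - 1) = (\<lambda>x. vm x - d1)"
    using r1 v0 vm run1 unfolding reflects_def k1_def by blast
  obtain u2 where u2: "solution x0 G2 u2" "u2 0 = vm" "u2 (k2 - 1) = (\<lambda>x. v' x - d2)"
    using r2 vm v' run2 unfolding reflects_def k2_def by blast
  define u where "u = glue k1 u1 (\<lambda>j x. u2 j x - d1)"
  have "solution x0 (compose G1 G2) u"
    unfolding u_def k1_def
    by (rule solution_glue[OF wf1 u1(1) solution_shift[OF u2(1)]])
      (use u1(3) u2(2) in \<open>simp add: k1_def\<close>)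
  moreover have "u 0 = v0" using k1 u1(2) by (simp add: u_def glue_def)
  moreover have "u (k1 + k2 - 1) = (\<lambda>x. v' x - d)"
    using k2 u2(3) d \<open>k2 - 1 + k1 = k1 + k2 - 1\<close> \<open>\<not> k1 + k2 - 1 < k1\<close> by (simp add: u_def glue_def algebra_simps)
  ultimately show ?thesis by (auto simp: cols_compose k1_def k2_def)
qed

theorem mainTheorem6:
  fixes x0 :: "'c::finite"
    and G1 G2 :: "'c tgraph"
    and \<sigma>1 \<sigma>2 :: "'c trans list"
  assumes "tgraph_wf G1" and "tgraph_wf G2"
    and "\<forall>t \<in> set (\<sigma>1 @ \<sigma>2). trans_wf x0 t"
    and "reflects x0 G1 \<sigma>1" and "reflects x0 G2 \<sigma>2"
  shows "reflects x0 (compose G1 G2) (\<sigma>1 @ \<sigma>2)"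
  unfolding reflects_def
  using reflects_compose_sound[OF assms(1,2,4,5)] reflects_compose_complete[OF assms(1,2,4,5)]
  by blast

end
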